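(* Let $k$ be a divisor of $n$ and let $X_k$ be the set of unordered partitions of $\{1,\dots,n\}$ into $k$ cells each of size $n/k$, with the natural action of $S_n$. If $\pi\in S_n$ has $c$ cycles, then the number of elements of $X_k$ fixed by $\pi$ is at most $k^c$. *)

theory Defs
  imports Main "HOL-Library.Disjoint_Sets" "HOL-Combinatorics.Permutations" "HOL-Combinatorics.Orbits"
begin

text \<open>Number of cycles of a permutation p of A (fixed points count as cycles of length 1):
  the number of distinct orbits.\<close>
definition num_cycles :: "(nat \<Rightarrow> nat) \<Rightarrow> nat set \<Rightarrow> nat" where
  "num_cycles p A = card (orbit p ` A)"

definition equipartitions :: "nat \<Rightarrow> nat \<Rightarrow> nat set set set" where
  "equipartitions n k = {P. partition_on {1..n} P \<and> card P = k \<and> (\<forall>B\<in>P. card B = n div k)}"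

definition act_partition :: "(nat \<Rightarrow> nat) \<Rightarrow> nat set set \<Rightarrow> nat set set" where
  "act_partition p P = (\<lambda>B. p ` B) ` P"

end

theory Submission
  imports Defs
begin

(* A partition fixed by p is the same as a p-invariant equivalence relation with at most k
   classes, and these are counted cycle by cycle. Let S' be p-invariant and r a point. An
   invariant relation R on S' \<union> orbit p r is determined by its restriction R' to S' and
   one more datum: if the class of r meets S', the R'-class it meets (card (S' // R')
   choices); otherwise the number d of classes met by the cycle of r, on which R is then
   congruence of exponents modulo d, and since these d classes are new,
   1 \<le> d \<le> k - card (S' // R'). So each R' has at most k extensions, and induction over the
   cycles gives k ^ c. *)

definition invariant_rel :: "('a \<Rightarrow> 'a) \<Rightarrow> ('a \<times> 'a) set \<Rightarrow> bool" where
  "invariant_rel p R \<longleftrightarrow> (\<forall>x y. (p x, p y) \<in> R \<longleftrightarrow> (x, y) \<in> R)"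

definition invariant_equivs :: "('a \<Rightarrow> 'a) \<Rightarrow> 'a set \<Rightarrow> nat \<Rightarrow> ('a \<times> 'a) set set" where
  "invariant_equivs p S k = {R. equiv S R \<and> invariant_rel p R \<and> card (S // R) \<le> k}"

(* For p-invariant R, the number of R-classes met by the p-orbit of x. *)
definition class_period :: "('a \<Rightarrow> 'a) \<Rightarrow> ('a \<times> 'a) set \<Rightarrow> 'a \<Rightarrow> nat" where
  "class_period p R x = (LEAST d. 0 < d \<and> ((p ^^ d) x, x) \<in> R)"

definition extension_code :: "('a \<Rightarrow> 'a) \<Rightarrow> 'a set \<Rightarrow> 'a \<Rightarrow> ('a \<times> 'a) set \<Rightarrow> 'a set + nat" where
  "extension_code p S' r R =
    (if R `` {r} \<inter> S' = {} then Inr (class_period p R r) else Inl (R `` {r} \<inter> S'))"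

lemma invariant_rel_funpow:
  assumes "invariant_rel p R"
  shows "((p ^^ n) x, (p ^^ n) y) \<in> R \<longleftrightarrow> (x, y) \<in> R"
  using assms by (induction n) (simp_all add: invariant_rel_def)

lemma funpow_mem_carrier:
  assumes "equiv S R" "invariant_rel p R" "x \<in> S"
  shows "(p ^^ n) x \<in> S"
proof -
  have "(x, x) \<in> R"
    using assms(1,3) by (auto simp: equiv_def refl_on_def)
  then have "((p ^^ n) x, (p ^^ n) x) \<in> R"
    using invariant_rel_funpow[OF assms(2)] by simp
  then show ?thesis
    using equiv_type[OF assms(1)] by blast
qed

lemma funpow_rel_self_add:
  assumes "trans R" "invariant_rel p R" "((p ^^ a) x, x) \<in> R" "((p ^^ b) x, x) \<in> R"
  shows "((p ^^ (a + b)) x, x) \<in> R"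
proof -
  have "((p ^^ a) ((p ^^ b) x), (p ^^ a) x) \<in> R"
    using assms(2,4) by (simp add: invariant_rel_funpow)
  then show ?thesis
    using assms(1,3) by (auto simp: funpow_add dest: transD)
qed

lemma funpow_rel_self_diff:
  assumes "sym R" "trans R" "invariant_rel p R" "((p ^^ a) x, x) \<in> R" "((p ^^ (a + b)) x, x) \<in> R"
  shows "((p ^^ b) x, x) \<in> R"
proof -
  have "((p ^^ b) ((p ^^ a) x), (p ^^ b) x) \<in> R"
    using assms(3,4) by (simp add: invariant_rel_funpow)
  moreover have "(p ^^ (a + b)) x = (p ^^ b) ((p ^^ a) x)"
    by (simp add: funpow_add add.commute[of a])
  ultimately show ?thesis
    using assms(1,2,5) by (auto dest: symD transD)
qed

lemma funpow_image_eq: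
  assumes "p ` S = S"
  shows "(p ^^ n) ` S = S"
proof (induction n)
  case (Suc n)
  then show ?case
    using assms by (metis funpow.simps(2) image_comp)
qed simp

lemma finite_invariant_equivs:
  assumes "finite S"
  shows "finite (invariant_equivs p S k)"
proof (rule finite_subset)
  show "invariant_equivs p S k \<subseteq> Pow (S \<times> S)"
    by (auto simp: invariant_equivs_def dest: equiv_type)
qed (use assms in simp)

lemma equiv_Restr:
  assumes "equiv S R" "S' \<subseteq> S"
  shows "equiv S' (Restr R S')"
  using assms unfolding equiv_def refl_on_def sym_def trans_def by blast

lemma classes_subset_quotient: "S' \<subseteq> S \<Longrightarrow> (\<lambda>x. R `` {x}) ` S' \<subseteq> S // R"
  by (auto simp: quotient_def)

lemma card_quotient_Restr_le_classes:
  assumes "finite S'"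
  shows "card (S' // Restr R S') \<le> card ((\<lambda>x. R `` {x}) ` S')"
proof -
  have "S' // Restr R S' = (\<lambda>C. C \<inter> S') ` (\<lambda>x. R `` {x}) ` S'"
    by (auto simp: quotient_def)
  then show ?thesis
    using assms by (simp add: card_image_le)
qed

lemma card_quotient_Restr_le:
  assumes "equiv S R" "finite S" "S' \<subseteq> S"
  shows "card (S' // Restr R S') \<le> card (S // R)"
proof -
  have "card (S' // Restr R S') \<le> card ((\<lambda>x. R `` {x}) ` S')"
    using card_quotient_Restr_le_classes finite_subset[OF assms(3,2)] .
  also have "\<dots> \<le> card (S // R)"
    using finite_quotient[OF assms(2) equiv_type[OF assms(1)]] classes_subset_quotient[OF assms(3)]
    by (rule card_mono)
  finally show ?thesis .
qed

lemma equiv_eqI_representatives: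
  assumes R1: "equiv S R1" and R2: "equiv S R2" and "S' \<subseteq> S"
    and Restr_eq: "Restr R1 S' = Restr R2 S'"
    and reps: "\<And>a. a \<in> S \<Longrightarrow> \<exists>a'\<in>S'. (a, a') \<in> R1 \<and> (a, a') \<in> R2"
  shows "R1 = R2"
proof -
  have "(a, b) \<in> R1 \<longleftrightarrow> (a, b) \<in> R2" if a: "a \<in> S" and b: "b \<in> S" for a b
  proof -
    obtain a' b' where a': "a' \<in> S'" "(a, a') \<in> R1" "(a, a') \<in> R2"
      and b': "b' \<in> S'" "(b, b') \<in> R1" "(b, b') \<in> R2"
      using reps[OF a] reps[OF b] by blast
    have "(a, b) \<in> R1 \<longleftrightarrow> (a', b') \<in> R1"
      using R1 a' b' by (meson equivE symD transD)
    also have "\<dots> \<longleftrightarrow> (a', b') \<in> R2"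
      using Restr_eq a'(1) b'(1) by blast
    also have "\<dots> \<longleftrightarrow> (a, b) \<in> R2"
      using R2 a' b' by (meson equivE symD transD)
    finally show ?thesis .
  qed
  then show ?thesis
    using equiv_type[OF R1] equiv_type[OF R2] by auto
qed

context
  fixes p :: "'a \<Rightarrow> 'a"
  assumes perm: "permutation p"
begin

lemma inj_perm: "inj p"
  using permutation_bijective[OF perm] by (rule bij_is_inj)

lemma mem_orbit_iff: "y \<in> orbit p x \<longleftrightarrow> (\<exists>n. y = (p ^^ n) x)"
  using orbit_altdef_permutation[OF perm] by auto

lemma orbit_eq_if_mem: "y \<in> orbit p x \<Longrightarrow> orbit p y = orbit p x"
  by (rule orbit_cyclic_eq3[OF cyclic_on_orbit'[OF perm]])

lemma orbit_funpow_back: "y \<in> orbit p x \<Longrightarrow> \<exists>m. (p ^^ m) y = x"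
  by (metis mem_orbit_iff orbit_swap permutation_self_in_orbit[OF perm])

lemma orbit_subset_invariant: "p ` S = S \<Longrightarrow> x \<in> S \<Longrightarrow> orbit p x \<subseteq> S"
  by (metis funpow_image_eq image_eqI mem_orbit_iff subsetI)

lemma image_orbit: "p ` orbit p x = orbit p x"
proof (rule endo_inj_surj)
  show "finite (orbit p x)"
    by (rule finite_orbit[OF permutation_self_in_orbit[OF perm]])
  show "p ` orbit p x \<subseteq> orbit p x"
    by (auto intro: orbit.step)
  show "inj_on p (orbit p x)"
    using inj_perm by (rule inj_on_subset) simp
qed

lemma class_period_returns:
  assumes "equiv S R" "x \<in> S"
  shows "0 < class_period p R x \<and> ((p ^^ class_period p R x) x, x) \<in> R"
proof -
  obtain n where "0 < n" "(p ^^ n) x = x"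
    using permutation_self[OF perm] by blast
  then have "0 < n \<and> ((p ^^ n) x, x) \<in> R"
    using assms by (auto simp: equiv_def refl_on_def)
  then show ?thesis
    unfolding class_period_def by (rule LeastI)
qed

lemma funpow_rel_self_iff:
  assumes equiv: "equiv S R" and inv: "invariant_rel p R" and "x \<in> S"
  shows "((p ^^ e) x, x) \<in> R \<longleftrightarrow> class_period p R x dvd e"
proof
  let ?d = "class_period p R x"
  have "sym R" "trans R" and refl: "(x, x) \<in> R"
    using equiv \<open>x \<in> S\<close> by (auto simp: equiv_def refl_on_def)
  have least: "0 < ?d" "((p ^^ ?d) x, x) \<in> R"
    using class_period_returns[OF equiv \<open>x \<in> S\<close>] by auto
  have mult: "((p ^^ (?d * q)) x, x) \<in> R" for q
  proof (induction q)
    case (Suc q)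
    then show ?case
      using funpow_rel_self_add[OF \<open>trans R\<close> inv least(2)] by simp
  qed (use refl in simp)
  show "?d dvd e" if "((p ^^ e) x, x) \<in> R"
  proof -
    have "((p ^^ (?d * (e div ?d) + e mod ?d)) x, x) \<in> R"
      using that by simp
    then have "((p ^^ (e mod ?d)) x, x) \<in> R"
      using funpow_rel_self_diff[OF \<open>sym R\<close> \<open>trans R\<close> inv mult] by blast
    moreover have "e mod ?d < ?d"
      using least by simp
    then have "\<not> (0 < e mod ?d \<and> ((p ^^ (e mod ?d)) x, x) \<in> R)"
      unfolding class_period_def by (rule not_less_Least)
    ultimately show ?thesis
      by (simp add: dvd_eq_mod_eq_0)
  qed
  show "((p ^^ e) x, x) \<in> R" if "?d dvd e"
    using that mult by auto
qed

lemma funpow_rel_funpow_iff: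
  assumes "equiv S R" "invariant_rel p R" "x \<in> S"
  shows "((p ^^ i) x, (p ^^ j) x) \<in> R \<longleftrightarrow> i mod class_period p R x = j mod class_period p R x"
proof -
  have le: "((p ^^ i) x, (p ^^ j) x) \<in> R \<longleftrightarrow> i mod class_period p R x = j mod class_period p R x"
    if "j \<le> i" for i j
  proof -
    have "(p ^^ i) x = (p ^^ j) ((p ^^ (i - j)) x)"
      using that by (metis comp_apply funpow_add le_add_diff_inverse)
    then show ?thesis
      using that by (simp add: invariant_rel_funpow[OF assms(2)] funpow_rel_self_iff[OF assms]
          mod_eq_dvd_iff_nat)
  qed
  have "((p ^^ i) x, (p ^^ j) x) \<in> R \<longleftrightarrow> ((p ^^ j) x, (p ^^ i) x) \<in> R"
    using assms(1) by (auto simp: equiv_def dest: symD)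
  then show ?thesis
    using le[of i j] le[of j i] by (cases "j \<le> i") auto
qed

lemma Restr_mem_invariant_equivs:
  assumes R: "R \<in> invariant_equivs p S k" and "finite S" "S' \<subseteq> S" "p ` S' = S'"
  shows "Restr R S' \<in> invariant_equivs p S' k"
proof -
  have "p x \<in> S' \<longleftrightarrow> x \<in> S'" for x
    using inj_image_mem_iff[OF inj_perm, of x S'] assms(4) by simp
  then have "invariant_rel p (Restr R S')"
    using R by (auto simp: invariant_equivs_def invariant_rel_def)
  moreover have "card (S' // Restr R S') \<le> k"
    using card_quotient_Restr_le[OF _ assms(2,3), of R] R by (simp add: invariant_equivs_def)
  ultimately show ?thesis
    using R equiv_Restr[OF _ assms(3)] by (simp add: invariant_equivs_def)
qed

lemma not_rel_orbit_if_class_disjoint: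
  assumes "invariant_rel p R" "p ` S' = S'" "R `` {r} \<inter> S' = {}"
    and "a \<in> orbit p r" "b \<in> S'"
  shows "(a, b) \<notin> R"
proof
  assume "(a, b) \<in> R"
  obtain m where "(p ^^ m) a = r"
    using orbit_funpow_back[OF assms(4)] by blast
  then have "(r, (p ^^ m) b) \<in> R"
    using invariant_rel_funpow[OF assms(1)] \<open>(a, b) \<in> R\<close> by metis
  moreover have "(p ^^ m) b \<in> S'"
    using funpow_image_eq[OF assms(2), of m] assms(5) by blast
  ultimately show False
    using assms(3) by blast
qed

lemma invariant_equivs_eqI_class_meets:
  assumes R1: "R1 \<in> invariant_equivs p (S' \<union> orbit p r) k"
    and R2: "R2 \<in> invariant_equivs p (S' \<union> orbit p r) k"
    and inv: "p ` S' = S'" and Restr_eq: "Restr R1 S' = Restr R2 S'"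
    and y: "y \<in> S'" "(r, y) \<in> R1" "(r, y) \<in> R2"
  shows "R1 = R2"
proof (rule equiv_eqI_representatives[where S = "S' \<union> orbit p r" and S' = S'])
  show equivs: "equiv (S' \<union> orbit p r) R1" "equiv (S' \<union> orbit p r) R2"
    using R1 R2 by (simp_all add: invariant_equivs_def)
  fix a assume a: "a \<in> S' \<union> orbit p r"
  show "\<exists>a'\<in>S'. (a, a') \<in> R1 \<and> (a, a') \<in> R2"
  proof (cases "a \<in> S'")
    case True
    then show ?thesis
      using equivs by (auto simp: equiv_def refl_on_def)
  next
    case False
    then obtain t where t: "a = (p ^^ t) r"
      using a mem_orbit_iff by blast
    have "(p ^^ t) y \<in> S'"
      using funpow_image_eq[OF inv, of t] y(1) by blast
    moreover have "((p ^^ t) r, (p ^^ t) y) \<in> R1" "((p ^^ t) r, (p ^^ t) y) \<in> R2"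
      using R1 R2 y(2,3) by (simp_all add: invariant_equivs_def invariant_rel_funpow)
    ultimately show ?thesis
      using t by blast
  qed
qed (use Restr_eq in auto)

lemma invariant_equivs_eqI_class_disjoint:
  assumes R1: "R1 \<in> invariant_equivs p (S' \<union> orbit p r) k"
    and R2: "R2 \<in> invariant_equivs p (S' \<union> orbit p r) k"
    and inv: "p ` S' = S'" and Restr_eq: "Restr R1 S' = Restr R2 S'"
    and disjoint: "R1 `` {r} \<inter> S' = {}" "R2 `` {r} \<inter> S' = {}"
    and period_eq: "class_period p R1 r = class_period p R2 r"
  shows "R1 = R2"
proof -
  have r: "r \<in> S' \<union> orbit p r"
    using permutation_self_in_orbit[OF perm] by simp
  have split: "R = Restr R S' \<union> Restr R (orbit p r)"
    if R: "R \<in> invariant_equivs p (S' \<union> orbit p r) k" and "R `` {r} \<inter> S' = {}" for R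
  proof -
    have equiv: "equiv (S' \<union> orbit p r) R" and "invariant_rel p R"
      using R by (simp_all add: invariant_equivs_def)
    have "(a, b) \<notin> R" "(b, a) \<notin> R" if "a \<in> orbit p r" "b \<in> S'" for a b
      using not_rel_orbit_if_class_disjoint[OF \<open>invariant_rel p R\<close> inv \<open>R `` {r} \<inter> S' = {}\<close> that]
        equiv by (auto simp: equiv_def dest: symD)
    then show ?thesis
      using equiv_type[OF equiv] by blast
  qed
  have "(a, b) \<in> R1 \<longleftrightarrow> (a, b) \<in> R2" if a: "a \<in> orbit p r" and b: "b \<in> orbit p r" for a b
  proof -
    obtain i j where "a = (p ^^ i) r" "b = (p ^^ j) r"
      using a b by (auto simp: mem_orbit_iff)
    then show ?thesis
      using R1 R2 funpow_rel_funpow_iff[OF _ _ r] period_eq by (simp add: invariant_equivs_def)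
  qed
  then have "Restr R1 (orbit p r) = Restr R2 (orbit p r)"
    by auto
  then show ?thesis
    using split[OF R1 disjoint(1)] split[OF R2 disjoint(2)] Restr_eq by simp
qed

lemma card_classes_funpow_class_period:
  assumes equiv: "equiv S R" and inv: "invariant_rel p R" and "x \<in> S"
  shows "card ((\<lambda>i. R `` {(p ^^ i) x}) ` {..<class_period p R x}) = class_period p R x"
proof -
  let ?d = "class_period p R x"
  have "inj_on (\<lambda>i. R `` {(p ^^ i) x}) {..<?d}"
  proof (rule inj_onI)
    fix i j assume "i \<in> {..<?d}" "j \<in> {..<?d}" and "R `` {(p ^^ i) x} = R `` {(p ^^ j) x}"
    moreover have "(p ^^ i) x \<in> S" "(p ^^ j) x \<in> S"
      using funpow_mem_carrier[OF assms] by blast+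
    ultimately have "i mod ?d = j mod ?d"
      using eq_equiv_class_iff[OF equiv] funpow_rel_funpow_iff[OF assms] by simp
    then show "i = j"
      using \<open>i \<in> {..<?d}\<close> \<open>j \<in> {..<?d}\<close> by simp
  qed
  then show ?thesis
    by (simp add: card_image)
qed

lemma card_quotient_Restr_add_class_period_le:
  assumes fin: "finite S'" and inv: "p ` S' = S'"
    and R: "R \<in> invariant_equivs p (S' \<union> orbit p r) k" and disjoint: "R `` {r} \<inter> S' = {}"
  shows "card (S' // Restr R S') + class_period p R r \<le> card ((S' \<union> orbit p r) // R)"
proof -
  let ?S = "S' \<union> orbit p r" and ?d = "class_period p R r" and ?cls = "\<lambda>x. R `` {x}"
  let ?cycle = "(\<lambda>i. (p ^^ i) r) ` {..<?d}"
  have equiv: "equiv ?S R" and "invariant_rel p R"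
    using R by (simp_all add: invariant_equivs_def)
  have r: "r \<in> ?S"
    using permutation_self_in_orbit[OF perm] by simp
  have cycle_sub: "?cycle \<subseteq> orbit p r"
    using mem_orbit_iff by blast
  have card_cycle: "card (?cls ` ?cycle) = ?d"
    using card_classes_funpow_class_period[OF equiv \<open>invariant_rel p R\<close> r]
    by (simp add: image_comp comp_def)
  have "?cls ` S' \<inter> ?cls ` ?cycle = {}"
  proof (rule ccontr)
    assume "?cls ` S' \<inter> ?cls ` ?cycle \<noteq> {}"
    then obtain a b where "a \<in> ?cycle" "b \<in> S'" "?cls a = ?cls b"
      by blast
    then have "(a, b) \<in> R"
      using eq_equiv_class_iff[OF equiv] cycle_sub by blast
    then show False
      using not_rel_orbit_if_class_disjoint[OF \<open>invariant_rel p R\<close> inv disjoint] \<open>a \<in> ?cycle\<close> \<open>b \<in> S'\<close>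
        cycle_sub by blast
  qed
  then have "card (?cls ` S') + card (?cls ` ?cycle) = card (?cls ` (S' \<union> ?cycle))"
    using fin by (simp add: card_Un_disjoint image_Un)
  also have "\<dots> \<le> card (?S // R)"
  proof (rule card_mono)
    show "finite (?S // R)"
      using fin finite_orbit[OF permutation_self_in_orbit[OF perm]] equiv_type[OF equiv]
      by (intro finite_quotient) auto
    show "?cls ` (S' \<union> ?cycle) \<subseteq> ?S // R"
      using cycle_sub by (intro classes_subset_quotient) blast
  qed
  finally show ?thesis
    using card_quotient_Restr_le_classes[OF fin, of R] card_cycle by linarith
qed

lemma inj_on_extension_code:
  assumes inv: "p ` S' = S'"
  shows "inj_on (extension_code p S' r) {R \<in> invariant_equivs p (S' \<union> orbit p r) k. Restr R S' = R'}"
proof (rule inj_onI)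
  fix R1 R2
  assume "R1 \<in> {R \<in> invariant_equivs p (S' \<union> orbit p r) k. Restr R S' = R'}"
    and "R2 \<in> {R \<in> invariant_equivs p (S' \<union> orbit p r) k. Restr R S' = R'}"
    and code_eq: "extension_code p S' r R1 = extension_code p S' r R2"
  then have R1: "R1 \<in> invariant_equivs p (S' \<union> orbit p r) k"
    and R2: "R2 \<in> invariant_equivs p (S' \<union> orbit p r) k"
    and Restr_eq: "Restr R1 S' = Restr R2 S'"
    by simp_all
  show "R1 = R2"
  proof (cases "R1 `` {r} \<inter> S' = {}")
    case True
    with code_eq have "R2 `` {r} \<inter> S' = {}" "class_period p R1 r = class_period p R2 r"
      by (auto simp: extension_code_def split: if_splits)
    then show ?thesis
      using invariant_equivs_eqI_class_disjoint[OF R1 R2 inv Restr_eq True] by simp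
  next
    case False
    with code_eq have "R1 `` {r} \<inter> S' = R2 `` {r} \<inter> S'"
      by (auto simp: extension_code_def split: if_splits)
    then obtain y where "y \<in> S'" "(r, y) \<in> R1" "(r, y) \<in> R2"
      using False by blast
    then show ?thesis
      using invariant_equivs_eqI_class_meets[OF R1 R2 inv Restr_eq] by simp
  qed
qed

lemma extension_code_mem:
  assumes fin: "finite S'" and inv: "p ` S' = S'" and R: "R \<in> invariant_equivs p (S' \<union> orbit p r) k"
  shows "extension_code p S' r R \<in> S' // Restr R S' <+> {1..k - card (S' // Restr R S')}"
proof (cases "R `` {r} \<inter> S' = {}")
  case True
  have r: "r \<in> S' \<union> orbit p r"
    using permutation_self_in_orbit[OF perm] by simp
  have "card (S' // Restr R S') + class_period p R r \<le> k"
    using card_quotient_Restr_add_class_period_le[OF fin inv R True] R by (simp add: invariant_equivs_def)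
  moreover have "0 < class_period p R r"
    using class_period_returns[OF _ r] R by (simp add: invariant_equivs_def)
  ultimately show ?thesis
    using True by (auto simp: extension_code_def intro: InrI)
next
  case False
  then obtain y where y: "y \<in> S'" "(r, y) \<in> R"
    by blast
  have "equiv (S' \<union> orbit p r) R"
    using R by (simp add: invariant_equivs_def)
  then have "R `` {r} \<inter> S' = Restr R S' `` {y}"
    using equiv_class_eq[OF _ y(2)] y(1) by auto
  then have "R `` {r} \<inter> S' \<in> S' // Restr R S'"
    using quotientI[OF y(1)] by simp
  then show ?thesis
    using False by (auto simp: extension_code_def intro: InlI)
qed

lemma card_invariant_equivs_Restr_eq_le:
  assumes fin: "finite S'" and inv: "p ` S' = S'"
  shows "card {R \<in> invariant_equivs p (S' \<union> orbit p r) k. Restr R S' = R'} \<le> k"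
    (is "card ?E \<le> k")
proof (cases "?E = {}")
  case False
  let ?m = "card (S' // R')"
  obtain R0 where "R0 \<in> invariant_equivs p (S' \<union> orbit p r) k" "Restr R0 S' = R'"
    using False by blast
  moreover have "finite (S' \<union> orbit p r)"
    using fin finite_orbit[OF permutation_self_in_orbit[OF perm]] by simp
  ultimately have R': "R' \<in> invariant_equivs p S' k"
    using Restr_mem_invariant_equivs[OF _ _ _ inv] by blast
  then have fin_quotient: "finite (S' // R')"
    by (intro finite_quotient[OF fin]) (auto simp: invariant_equivs_def dest: equiv_type)
  have "extension_code p S' r ` ?E \<subseteq> S' // R' <+> {1..k - ?m}"
    using extension_code_mem[OF fin inv] by blast
  then have "card ?E \<le> card (S' // R' <+> {1..k - ?m})"
    using inj_on_extension_code[OF inv] fin_quotient by (intro card_inj_on_le) simp_all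
  also have "\<dots> = ?m + (k - ?m)"
    using fin_quotient by (simp add: card_Plus)
  also have "\<dots> = k"
    using R' by (simp add: invariant_equivs_def)
  finally show ?thesis .
qed (simp only: card.empty zero_le)

lemma orbits_remove_orbit:
  shows "orbit p ` (S - orbit p x) = orbit p ` S - {orbit p x}"
proof
  show "orbit p ` (S - orbit p x) \<subseteq> orbit p ` S - {orbit p x}"
  proof
    fix C assume "C \<in> orbit p ` (S - orbit p x)"
    then obtain y where "y \<in> S" "y \<notin> orbit p x" "C = orbit p y"
      by blast
    moreover have "y \<in> orbit p y"
      by (rule permutation_self_in_orbit[OF perm])
    ultimately show "C \<in> orbit p ` S - {orbit p x}"
      by auto
  qed
  show "orbit p ` S - {orbit p x} \<subseteq> orbit p ` (S - orbit p x)"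
  proof
    fix C assume "C \<in> orbit p ` S - {orbit p x}"
    then obtain y where "y \<in> S" "C = orbit p y" "orbit p y \<noteq> orbit p x"
      by blast
    moreover have "y \<notin> orbit p x"
      using orbit_eq_if_mem \<open>orbit p y \<noteq> orbit p x\<close> by blast
    ultimately show "C \<in> orbit p ` (S - orbit p x)"
      by blast
  qed
qed

lemma card_invariant_equivs_le:
  assumes "finite S" "p ` S = S"
  shows "card (invariant_equivs p S k) \<le> k ^ card (orbit p ` S)"
  using assms
proof (induction "card (orbit p ` S)" arbitrary: S)
  case 0
  then have "S = {}"
    by (simp add: card_eq_0_iff)
  then have "invariant_equivs p S k \<subseteq> {{}}"
    by (auto simp: invariant_equivs_def dest: equiv_type)
  from card_mono[OF _ this] have "card (invariant_equivs p S k) \<le> card {{}}"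
    by simp
  then show ?case
    using "0.hyps" by simp
next
  case (Suc N S)
  then have "S \<noteq> {}"
    by auto
  then obtain r where r: "r \<in> S"
    by blast
  define S' where "S' = S - orbit p r"
  have "S' \<subseteq> S" and S_eq: "S = S' \<union> orbit p r"
    using orbit_subset_invariant[OF Suc.prems(2) r] by (auto simp: S'_def)
  have fin: "finite S'" and inv: "p ` S' = S'"
    using Suc.prems by (simp_all add: S'_def image_set_diff[OF inj_perm] image_orbit)
  have "card (orbit p ` S') = N"
    using Suc.hyps(2) Suc.prems(1) r by (simp add: S'_def orbits_remove_orbit)
  then have IH: "card (invariant_equivs p S' k) \<le> k ^ N"
    using Suc.hyps(1)[of S'] fin inv by simp
  let ?fiber = "\<lambda>R'. {R \<in> invariant_equivs p S k. Restr R S' = R'}"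
  have "invariant_equivs p S k = (\<Union>R'\<in>invariant_equivs p S' k. ?fiber R')"
  proof (intro equalityI subsetI)
    fix R assume "R \<in> invariant_equivs p S k"
    then show "R \<in> (\<Union>R'\<in>invariant_equivs p S' k. ?fiber R')"
      using Restr_mem_invariant_equivs[OF _ Suc.prems(1) \<open>S' \<subseteq> S\<close> inv] by blast
  qed blast
  then have "card (invariant_equivs p S k) = card (\<Union>R'\<in>invariant_equivs p S' k. ?fiber R')"
    by (rule arg_cong)
  also have "\<dots> \<le> (\<Sum>R'\<in>invariant_equivs p S' k. card (?fiber R'))"
    by (rule card_UN_le[OF finite_invariant_equivs[OF fin]])
  also have "\<dots> \<le> (\<Sum>R'\<in>invariant_equivs p S' k. k)"
    using card_invariant_equivs_Restr_eq_le[OF fin inv] by (intro sum_mono) (simp add: S_eq)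
  also have "\<dots> \<le> k * k ^ N"
    using IH by simp
  finally show ?case
    using Suc.hyps(2)[symmetric] by simp
qed

end

lemma invariant_rel_partition:
  assumes "inj p" "act_partition p P = P"
  shows "invariant_rel p {(x, y). \<exists>B\<in>P. x \<in> B \<and> y \<in> B}"
proof -
  have "(\<exists>B\<in>P. p x \<in> B \<and> p y \<in> B) \<longleftrightarrow> (\<exists>B\<in>act_partition p P. p x \<in> B \<and> p y \<in> B)" for x y
    using assms(2) by simp
  then show ?thesis
    by (auto simp: invariant_rel_def act_partition_def inj_image_mem_iff[OF assms(1)])
qed

theorem lemma4p3:
  fixes n k c :: nat and p :: "nat \<Rightarrow> nat"
  assumes "n \<ge> 1" and "k dvd n"
    and "p permutes {1..n}"
    and "num_cycles p {1..n} = c"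
  shows "card {P \<in> equipartitions n k. act_partition p P = P} \<le> k ^ c"
proof -
  let ?F = "{P \<in> equipartitions n k. act_partition p P = P}"
  let ?rel = "\<lambda>P. {(x, y). \<exists>B\<in>P. x \<in> B \<and> y \<in> B}"
  have quotient_rel: "{1..n} // ?rel P = P" if "P \<in> ?F" for P
    using that by (simp add: equipartitions_def partition_on_eq_quotient)
  have "inj_on ?rel ?F"
  proof (rule inj_onI)
    fix P Q assume "P \<in> ?F" "Q \<in> ?F" "?rel P = ?rel Q"
    then show "P = Q"
      using quotient_rel[of P] quotient_rel[of Q] by simp
  qed
  moreover have "?rel P \<in> invariant_equivs p {1..n} k" if P: "P \<in> ?F" for P
  proof -
    have "equiv {1..n} (?rel P)"
      using P by (simp add: equipartitions_def equiv_partition_on)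
    moreover have "invariant_rel p (?rel P)"
      using P by (intro invariant_rel_partition[OF permutes_inj[OF assms(3)]]) simp
    moreover have "card ({1..n} // ?rel P) \<le> k"
      using P by (simp only: quotient_rel[OF P]) (simp add: equipartitions_def)
    ultimately show ?thesis
      by (simp add: invariant_equivs_def)
  qed
  ultimately have "card ?F \<le> card (invariant_equivs p {1..n} k)"
    by (intro card_inj_on_le finite_invariant_equivs image_subsetI) simp_all
  also have "\<dots> \<le> k ^ card (orbit p ` {1..n})"
    using card_invariant_equivs_le[OF permutes_imp_permutation[OF _ assms(3)]]
      permutes_image[OF assms(3)] by simp
  finally show ?thesis
    using assms(4) by (simp add: num_cycles_def)
qed

end
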